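(* Consider a PWA system, as defined in the context, satisfying (A1)–(A5). Then its global dynamical relative degree equals $1$ if and only if the common relative degree of all component models is $\mu_c=1$.
   Context: A discrete-time piecewise affine (PWA) system is $x_{k+1}=\mathbf{A}_k x_k+\mathbf{B}_k u_k+\mathbf{F}_k$, $y_k=\mathbf{C}_k x_k+\mathbf{D}_k u_k+\mathbf{G}_k$, $k\in\mathbb{Z}$, with state $x_k\in\mathbb{R}^{n_x}$, input $u_k\in\mathbb{R}^{n_u}$, output $y_k\in\mathbb{R}^{n_y}$. For each $M\in\{A,B,F,C,D,G\}$, $\mathbf{M}_k=\sum_{q=1}^{|Q|} M_{q,k}K_q(\delta_k)$, where the $M_{q,k}$ are real matrices (possibly time-varying), $\delta_k=\delta(x_k)=H(Px_k-\theta)$ with $H$ the elementwise Heaviside step function, $P\in\mathbb{R}^{n_P\times n_x}$, $\theta\in\mathbb{R}^{n_P}$, and $K_q(\delta)=1$ if $\delta\in\Delta^*_q$ and $0$ otherwise ($\Delta^*_q$ a set of binary vectors). The locations $Q_q=\{x:\delta(x)\in\Delta^*_q\}$ are disjoint, have union $\mathbb{R}^{n_x}$, and each is a union of disjoint convex polytopes. The $q$-th component model is the affine system with matrices $A_{q,k},\dots,G_{q,k}$ and relative degree $\mu_q$ (number of time steps for an input value to influence the output). Global dynamical relative degree: the smallest integer $\mu\ge 0$ such that the explicit expression of $y_{k+\mu}$ in terms of the component matrices, the selector functions $K_q$, $x_k$ and $u_i$ ($i\ge k$) contains $u_k$ outside of a selector function for every switching sequence on time steps $k,\dots,k+\mu$.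 Assumptions: (A1) $x_0$ lies in the set of initial conditions from which every location is reachable in finite time; (A2) single-input single-output; (A3) switching depends only on the state, not the input; (A4) all component models have the same relative degree $\mu_c$ for all $q$ and $k$; (A5) location-invariant output function: $\mathbf{C}_k=C_k$, $\mathbf{D}_k=D_k$, $\mathbf{G}_k=G_k$, where $C_k,D_k,G_k$ may vary with time but are identical for all locations $q$ and are known for all $k$. *)

theory Defs
  imports "HOL-Analysis.Analysis"
begin

text \<open>Component matrices A q k, B q k, F q k (time-varying);
  output matrices C k, D k, G k are location invariant (assumption A5).  Input and output
  are scalars (assumption A2).  Switching depends only on the state (assumption A3).\<close>

text \<open>Heaviside step function, with the convention H(0) = 1 (value true).\<close>
definition heav :: "real \<Rightarrow> bool" where
  "heav s \<longleftrightarrow> 0 \<le> s"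

definition delta :: "real^'n^'p \<Rightarrow> real^'p \<Rightarrow> real^'n \<Rightarrow> bool^'p" where
  "delta P \<theta> x = (\<chi> i. heav ((P *v x - \<theta>) $ i))"

definition selK :: "('q \<Rightarrow> (bool^'p) set) \<Rightarrow> 'q \<Rightarrow> bool^'p \<Rightarrow> real" where
  "selK Ds q d = (if d \<in> Ds q then 1 else 0)"

definition location :: "real^'n^'p \<Rightarrow> real^'p \<Rightarrow> ('q \<Rightarrow> (bool^'p) set) \<Rightarrow> 'q \<Rightarrow> (real^'n) set" where
  "location P \<theta> Ds q = {x. delta P \<theta> x \<in> Ds q}"

text \<open>One step of the PWA state equation x_{k+1} = A_k x_k + B_k u_k + F_k
  with bold M_k = sum_q M_{q,k} K_q(delta_k).\<close>
definition pwa_step ::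
  "'q set \<Rightarrow> ('q \<Rightarrow> (bool^'p) set) \<Rightarrow> real^'n^'p \<Rightarrow> real^'p
   \<Rightarrow> ('q \<Rightarrow> int \<Rightarrow> real^'n^'n) \<Rightarrow> ('q \<Rightarrow> int \<Rightarrow> real^'n) \<Rightarrow> ('q \<Rightarrow> int \<Rightarrow> real^'n)
   \<Rightarrow> int \<Rightarrow> real^'n \<Rightarrow> real \<Rightarrow> real^'n" where
  "pwa_step Qs Ds P \<theta> A B F k x u =
     (\<Sum>q\<in>Qs. selK Ds q (delta P \<theta> x) *\<^sub>R A q k) *v x
     + u *\<^sub>R (\<Sum>q\<in>Qs. selK Ds q (delta P \<theta> x) *\<^sub>R B q k)
     + (\<Sum>q\<in>Qs. selK Ds q (delta P \<theta> x) *\<^sub>R F q k)"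

definition pwa_output :: "(int \<Rightarrow> real^'n) \<Rightarrow> (int \<Rightarrow> real) \<Rightarrow> (int \<Rightarrow> real)
   \<Rightarrow> int \<Rightarrow> real^'n \<Rightarrow> real \<Rightarrow> real" where
  "pwa_output C D G k x u = C k \<bullet> x + D k * u + G k"

fun pwa_traj ::
  "'q set \<Rightarrow> ('q \<Rightarrow> (bool^'p) set) \<Rightarrow> real^'n^'p \<Rightarrow> real^'p
   \<Rightarrow> ('q \<Rightarrow> int \<Rightarrow> real^'n^'n) \<Rightarrow> ('q \<Rightarrow> int \<Rightarrow> real^'n) \<Rightarrow> ('q \<Rightarrow> int \<Rightarrow> real^'n)
   \<Rightarrow> real^'n \<Rightarrow> (int \<Rightarrow> real) \<Rightarrow> nat \<Rightarrow> real^'n" where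
  "pwa_traj Qs Ds P \<theta> A B F x0 u 0 = x0"
| "pwa_traj Qs Ds P \<theta> A B F x0 u (Suc n) =
     pwa_step Qs Ds P \<theta> A B F (int n) (pwa_traj Qs Ds P \<theta> A B F x0 u n) (u (int n))"

definition every_location_reachable ::
  "'q set \<Rightarrow> ('q \<Rightarrow> (bool^'p) set) \<Rightarrow> real^'n^'p \<Rightarrow> real^'p
   \<Rightarrow> ('q \<Rightarrow> int \<Rightarrow> real^'n^'n) \<Rightarrow> ('q \<Rightarrow> int \<Rightarrow> real^'n) \<Rightarrow> ('q \<Rightarrow> int \<Rightarrow> real^'n)
   \<Rightarrow> real^'n \<Rightarrow> bool" where
  "every_location_reachable Qs Ds P \<theta> A B F x0 \<longleftrightarrow>
     (\<forall>q\<in>Qs. \<exists>u N. pwa_traj Qs Ds P \<theta> A B F x0 u N \<in> location P \<theta> Ds q)"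

text \<open>For a switching sequence s (s i = active location at time k+i), the product
  A_{s m, k+m} ... A_{s 1, k+1}.\<close>
fun prodA :: "('q \<Rightarrow> int \<Rightarrow> real^'n^'n) \<Rightarrow> (nat \<Rightarrow> 'q) \<Rightarrow> int \<Rightarrow> nat \<Rightarrow> real^'n^'n" where
  "prodA A s k 0 = mat 1"
| "prodA A s k (Suc j) = A (s (Suc j)) (k + int (Suc j)) ** prodA A s k j"

text \<open>Coefficient multiplying u_k (outside the selector functions) in the explicit
  expression of y_{k+mu}, for the switching sequence s on time steps k..k+mu:
  D_k for mu = 0, and C_{k+mu} A_{s(mu-1),k+mu-1} ... A_{s 1,k+1} B_{s 0,k} for mu >= 1.\<close>
definition uk_coeff :: "('q \<Rightarrow> int \<Rightarrow> real^'n^'n) \<Rightarrow> ('q \<Rightarrow> int \<Rightarrow> real^'n)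
   \<Rightarrow> (int \<Rightarrow> real^'n) \<Rightarrow> (int \<Rightarrow> real) \<Rightarrow> (nat \<Rightarrow> 'q) \<Rightarrow> int \<Rightarrow> nat \<Rightarrow> real" where
  "uk_coeff A B C D s k \<mu> =
     (case \<mu> of 0 \<Rightarrow> D k
      | Suc m \<Rightarrow> C (k + int \<mu>) \<bullet> (prodA A s k m *v B (s 0) k))"

text \<open>Relative degree mu of the q-th component (affine) model at time k:
  u_k first influences the output at time k+mu.\<close>
definition comp_reldeg :: "('q \<Rightarrow> int \<Rightarrow> real^'n^'n) \<Rightarrow> ('q \<Rightarrow> int \<Rightarrow> real^'n)
   \<Rightarrow> (int \<Rightarrow> real^'n) \<Rightarrow> (int \<Rightarrow> real) \<Rightarrow> 'q \<Rightarrow> int \<Rightarrow> nat \<Rightarrow> bool" where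
  "comp_reldeg A B C D q k \<mu> \<longleftrightarrow>
     (\<forall>j<\<mu>. uk_coeff A B C D (\<lambda>_. q) k j = 0) \<and> uk_coeff A B C D (\<lambda>_. q) k \<mu> \<noteq> 0"

definition contains_uk :: "'q set \<Rightarrow> ('q \<Rightarrow> int \<Rightarrow> real^'n^'n) \<Rightarrow> ('q \<Rightarrow> int \<Rightarrow> real^'n)
   \<Rightarrow> (int \<Rightarrow> real^'n) \<Rightarrow> (int \<Rightarrow> real) \<Rightarrow> nat \<Rightarrow> bool" where
  "contains_uk Qs A B C D \<mu> \<longleftrightarrow>
     (\<forall>k s. (\<forall>i\<le>\<mu>. s i \<in> Qs) \<longrightarrow> uk_coeff A B C D s k \<mu> \<noteq> 0)"

definition global_reldeg :: "'q set \<Rightarrow> ('q \<Rightarrow> int \<Rightarrow> real^'n^'n) \<Rightarrow> ('q \<Rightarrow> int \<Rightarrow> real^'n)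
   \<Rightarrow> (int \<Rightarrow> real^'n) \<Rightarrow> (int \<Rightarrow> real) \<Rightarrow> nat \<Rightarrow> bool" where
  "global_reldeg Qs A B C D \<mu> \<longleftrightarrow>
     contains_uk Qs A B C D \<mu> \<and> (\<forall>\<mu>'<\<mu>. \<not> contains_uk Qs A B C D \<mu>')"

end

theory Submission
  imports Defs
begin

text \<open>Because the output map is the same in every location, the coefficient of \<open>u\<^sub>k\<close>
  in \<open>y\<^sub>k\<close> is \<open>D\<^sub>k\<close> and in \<open>y\<^sub>k\<^sub>+\<^sub>1\<close> it is \<open>C\<^sub>k\<^sub>+\<^sub>1 B\<^sub>q\<^sub>,\<^sub>k\<close>, where \<open>q\<close> is the location
  at time \<open>k\<close>; neither depends on the rest of the switching sequence. Hence every
  component relative degree \<open>\<mu>\<^sub>c \<le> 1\<close> is also the global one, while constant switching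
  sequences show that the global relative degree is never below \<open>\<mu>\<^sub>c\<close>.\<close>

lemma uk_coeff_0 [simp]: "uk_coeff A B C D s k 0 = D k"
  by (simp add: uk_coeff_def)

lemma uk_coeff_1 [simp]: "uk_coeff A B C D s k 1 = C (k + 1) \<bullet> B (s 0) k"
  by (simp add: uk_coeff_def)

lemma uk_coeff_le_1_constant_switching:
  assumes "\<mu> \<le> 1"
  shows "uk_coeff A B C D s k \<mu> = uk_coeff A B C D (\<lambda>_. s 0) k \<mu>"
  using assms by (cases \<mu>) (auto simp: uk_coeff_def)

lemma contains_uk_constant_switching:
  assumes "contains_uk Qs A B C D \<mu>" and "q \<in> Qs"
  shows "uk_coeff A B C D (\<lambda>_. q) k \<mu> \<noteq> 0"
  using assms by (simp add: contains_uk_def)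

lemma contains_uk_le_1_iff:
  assumes "\<mu> \<le> 1"
  shows "contains_uk Qs A B C D \<mu> \<longleftrightarrow> (\<forall>q\<in>Qs. \<forall>k. uk_coeff A B C D (\<lambda>_. q) k \<mu> \<noteq> 0)"
proof
  assume "contains_uk Qs A B C D \<mu>"
  then show "\<forall>q\<in>Qs. \<forall>k. uk_coeff A B C D (\<lambda>_. q) k \<mu> \<noteq> 0"
    by (simp add: contains_uk_constant_switching)
next
  assume nonzero: "\<forall>q\<in>Qs. \<forall>k. uk_coeff A B C D (\<lambda>_. q) k \<mu> \<noteq> 0"
  show "contains_uk Qs A B C D \<mu>"
    unfolding contains_uk_def
  proof (intro allI impI)
    fix k s
    assume "\<forall>i\<le>\<mu>. s i \<in> Qs"
    then have "uk_coeff A B C D (\<lambda>_. s 0) k \<mu> \<noteq> 0"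
      using nonzero by simp
    then show "uk_coeff A B C D s k \<mu> \<noteq> 0"
      using uk_coeff_le_1_constant_switching [OF assms] by metis
  qed
qed

lemma not_contains_uk_below_comp_reldeg:
  assumes "q \<in> Qs" and "comp_reldeg A B C D q k \<mu>c" and "\<mu> < \<mu>c"
  shows "\<not> contains_uk Qs A B C D \<mu>"
proof
  assume "contains_uk Qs A B C D \<mu>"
  then have "uk_coeff A B C D (\<lambda>_. q) k \<mu> \<noteq> 0"
    using \<open>q \<in> Qs\<close> by (rule contains_uk_constant_switching)
  moreover have "uk_coeff A B C D (\<lambda>_. q) k \<mu> = 0"
    using assms(2,3) by (simp add: comp_reldeg_def)
  ultimately show False
    by contradiction
qed

lemma contains_uk_comp_reldeg:
  assumes "\<mu>c \<le> 1" and "\<forall>q\<in>Qs. \<forall>k. comp_reldeg A B C D q k \<mu>c"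
  shows "contains_uk Qs A B C D \<mu>c"
  using assms by (simp add: contains_uk_le_1_iff comp_reldeg_def)

lemma global_reldeg_comp_reldeg:
  assumes "Qs \<noteq> {}" and "\<mu>c \<le> 1" and "\<forall>q\<in>Qs. \<forall>k. comp_reldeg A B C D q k \<mu>c"
  shows "global_reldeg Qs A B C D \<mu>c"
proof -
  from \<open>Qs \<noteq> {}\<close> obtain q where "q \<in> Qs" by blast
  then have "\<forall>\<mu><\<mu>c. \<not> contains_uk Qs A B C D \<mu>"
    using assms(3) by (meson not_contains_uk_below_comp_reldeg)
  with contains_uk_comp_reldeg [OF assms(2,3)] show ?thesis
    by (simp add: global_reldeg_def)
qed

lemma global_reldeg_unique:
  assumes "global_reldeg Qs A B C D \<mu>" and "global_reldeg Qs A B C D \<mu>'"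
  shows "\<mu> = \<mu>'"
  using assms by (metis global_reldeg_def linorder_neqE_nat)

theorem lemma3:
  fixes Qs :: "'q set" and Ds :: "'q \<Rightarrow> (bool^'p) set"
    and P :: "real^'n^'p" and \<theta> :: "real^'p"
    and A :: "'q \<Rightarrow> int \<Rightarrow> real^'n^'n" and B F :: "'q \<Rightarrow> int \<Rightarrow> real^'n"
    and C :: "int \<Rightarrow> real^'n" and D :: "int \<Rightarrow> real"
    and x0 :: "real^'n" and \<mu>c :: nat
  assumes fin: "finite Qs"
    and disj: "\<forall>q\<in>Qs. \<forall>q'\<in>Qs. q \<noteq> q' \<longrightarrow> location P \<theta> Ds q \<inter> location P \<theta> Ds q' = {}"
    and cover: "(\<Union>q\<in>Qs. location P \<theta> Ds q) = UNIV"
    and A1: "every_location_reachable Qs Ds P \<theta> A B F x0"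
    and A4: "\<forall>q\<in>Qs. \<forall>k. comp_reldeg A B C D q k \<mu>c"
  shows "global_reldeg Qs A B C D 1 \<longleftrightarrow> \<mu>c = 1"
proof
  from cover obtain q where q: "q \<in> Qs" by blast
  assume global: "global_reldeg Qs A B C D 1"
  then have "contains_uk Qs A B C D 1"
    by (simp add: global_reldeg_def)
  then have "\<mu>c \<le> 1"
    using q A4 by (meson not_contains_uk_below_comp_reldeg not_le)
  with q A4 have "global_reldeg Qs A B C D \<mu>c"
    by (intro global_reldeg_comp_reldeg) auto
  with global show "\<mu>c = 1"
    using global_reldeg_unique by blast
next
  assume "\<mu>c = 1"
  with cover A4 show "global_reldeg Qs A B C D 1"
    by (intro global_reldeg_comp_reldeg) auto
qed

end
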